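(* Let $0<m<L$, $\kappa=L/m$, $\delta\in(0,1)$, and suppose \[ \max(\alpha_-,0)<\alpha\le\frac{2}{(1+\delta)L+(1-\delta)m},\qquad \alpha_-:=\frac{1}{1-\delta}\left(\frac{2}{L+m}-\frac{\delta}{m}\right). \] Set $\rho_\star=1-\alpha m(1-\delta)$ and \[ \gamma_\star=\frac{\rho_\star\big(\kappa-1+(\kappa+1)(\delta-\rho_\star)\big)}{(\kappa-(1-\delta))\,\delta}. \] Then $0<\gamma_\star<\rho_\star^2$. *)

theory Defs
  imports Complex_Main
begin

end

theory Submission
  imports Defs
begin

text \<open>
  Everything depends on \<open>m\<close> and \<open>L\<close> only through \<open>\<kappa>\<close> and on \<open>\<alpha>\<close> only through
  \<open>t = \<alpha> m (1 - \<delta>) = 1 - \<rho>\<^sub>\<star>\<close>. After this rescaling the lower bound \<open>\<alpha> > \<alpha>\<^sub>-\<close> says exactly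
  that the numerator \<open>\<kappa> - 1 + (\<kappa> + 1)(\<delta> - \<rho>\<^sub>\<star>)\<close> of \<open>\<gamma>\<^sub>\<star>\<close> is positive, and the upper bound on
  \<open>\<alpha>\<close> says \<open>t ((1 + \<delta>) \<kappa> + 1 - \<delta>) \<le> 2 (1 - \<delta>)\<close>. The latter forces \<open>\<rho>\<^sub>\<star> > 0\<close>, and
  \<open>\<gamma>\<^sub>\<star> < \<rho>\<^sub>\<star>\<^sup>2\<close> amounts to a linear inequality in \<open>\<rho>\<^sub>\<star>\<close>, decreasing in \<open>\<rho>\<^sub>\<star>\<close>, which
  at the extreme admissible value \<open>\<rho>\<^sub>\<star> = 1 - 2 (1 - \<delta>) / ((1 + \<delta>) \<kappa> + 1 - \<delta>)\<close> holds
  with slack \<open>\<delta>\<^sup>2 ((1 + \<delta>) \<kappa> - (1 - \<delta>))\<close>.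
\<close>

lemma numerator_pos_of_lower_step_bound:
  fixes m L \<delta> \<alpha> :: real
  assumes "0 < m" "0 < L" "\<delta> < 1"
    and "(1 / (1 - \<delta>)) * (2 / (L + m) - \<delta> / m) < \<alpha>"
  shows "0 < L / m - 1 + (L / m + 1) * (\<delta> - (1 - \<alpha> * m * (1 - \<delta>)))"
proof -
  have "0 < m * (L + m)" using assms by simp
  moreover have "2 / (L + m) - \<delta> / m < \<alpha> * (1 - \<delta>)"
    using assms by (simp add: divide_less_eq mult.commute)
  ultimately have "(2 / (L + m) - \<delta> / m) * (m * (L + m)) < \<alpha> * (1 - \<delta>) * (m * (L + m))"
    by (intro mult_strict_right_mono)
  moreover have "(2 / (L + m) - \<delta> / m) * (m * (L + m)) = 2 * m - \<delta> * (L + m)"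
  proof -
    have "L + m \<noteq> 0" "m \<noteq> 0" using assms(1,2) by auto
    then show ?thesis by (simp add: divide_simps)
  qed
  ultimately have "0 < (L - m + (L + m) * (\<delta> - (1 - \<alpha> * m * (1 - \<delta>)))) / m"
    using assms(1) by (simp add: algebra_simps)
  also have "\<dots> = L / m - 1 + (L / m + 1) * (\<delta> - (1 - \<alpha> * m * (1 - \<delta>)))"
    using assms(1) by (simp add: field_simps)
  finally show ?thesis .
qed

lemma upper_step_bound_rescaled:
  fixes m L \<delta> \<alpha> :: real
  assumes "0 < m" "0 < L" "0 < \<delta>" "\<delta> < 1"
    and "\<alpha> \<le> 2 / ((1 + \<delta>) * L + (1 - \<delta>) * m)"
  shows "(1 - (1 - \<alpha> * m * (1 - \<delta>))) * ((1 + \<delta>) * (L / m) + (1 - \<delta>)) \<le> 2 * (1 - \<delta>)"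
proof -
  define S where "S = (1 + \<delta>) * (L / m) + (1 - \<delta>)"
  have "0 < S" using assms unfolding S_def by (simp add: add_pos_pos)
  moreover have "(1 + \<delta>) * L + (1 - \<delta>) * m = m * S"
    using assms unfolding S_def by (simp add: field_simps)
  ultimately have "\<alpha> * (m * S) \<le> 2"
    using assms by (simp add: pos_le_divide_eq)
  then have "\<alpha> * (m * S) * (1 - \<delta>) \<le> 2 * (1 - \<delta>)"
    using assms by (intro mult_right_mono) auto
  then show ?thesis unfolding S_def[symmetric] by (simp add: algebra_simps)
qed

lemma rate_pos_of_upper_step_bound:
  fixes \<kappa> \<delta> \<rho> :: real
  assumes "1 \<le> \<kappa>" "0 < \<delta>"
    and "(1 - \<rho>) * ((1 + \<delta>) * \<kappa> + (1 - \<delta>)) \<le> 2 * (1 - \<delta>)"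
  shows "0 < \<rho>"
proof (rule ccontr)
  define S where "S = (1 + \<delta>) * \<kappa> + (1 - \<delta>)"
  assume "\<not> 0 < \<rho>"
  have "1 + \<delta> \<le> (1 + \<delta>) * \<kappa>" using assms by simp
  then have "2 \<le> S" unfolding S_def by simp
  then have "S \<le> (1 - \<rho>) * S" using \<open>\<not> 0 < \<rho>\<close> by (simp add: mult_le_cancel_right1)
  moreover have "(1 - \<rho>) * S \<le> 2 * (1 - \<delta>)" using assms(3) unfolding S_def .
  moreover have "2 * (1 - \<delta>) < 2" using assms(2) by simp
  ultimately show False using \<open>2 \<le> S\<close> by linarith
qed

lemma numerator_less_of_upper_step_bound:
  fixes \<kappa> \<delta> \<rho> :: real
  assumes "1 \<le> \<kappa>" "0 < \<delta>"
    and "(1 - \<rho>) * ((1 + \<delta>) * \<kappa> + (1 - \<delta>)) \<le> 2 * (1 - \<delta>)"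
  shows "\<kappa> - 1 + (\<kappa> + 1) * (\<delta> - \<rho>) < \<rho> * ((\<kappa> - (1 - \<delta>)) * \<delta>)"
proof -
  define S where "S = (1 + \<delta>) * \<kappa> + (1 - \<delta>)"
  define E where "E = \<kappa> - 1 + (\<kappa> + 1) * (\<delta> - \<rho>) - \<rho> * ((\<kappa> - (1 - \<delta>)) * \<delta>)"
  have "1 + \<delta> \<le> (1 + \<delta>) * \<kappa>" using assms by simp
  then have "1 - \<delta> < (1 + \<delta>) * \<kappa>" and "0 < S" using assms(2) unfolding S_def by linarith+
  have "E * S = - \<delta>\<^sup>2 * ((1 + \<delta>) * \<kappa> - (1 - \<delta>))
      + ((1 - \<rho>) * S - 2 * (1 - \<delta>)) * (\<kappa> + 1 + \<delta> * (\<kappa> - 1 + \<delta>))"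
    unfolding E_def S_def by (simp add: algebra_simps power2_eq_square)
  moreover have "0 < \<delta>\<^sup>2 * ((1 + \<delta>) * \<kappa> - (1 - \<delta>))"
    using \<open>1 - \<delta> < (1 + \<delta>) * \<kappa>\<close> assms(2) by (intro mult_pos_pos) simp_all
  moreover have "((1 - \<rho>) * S - 2 * (1 - \<delta>)) * (\<kappa> + 1 + \<delta> * (\<kappa> - 1 + \<delta>)) \<le> 0"
    using assms unfolding S_def by (intro mult_nonpos_nonneg) auto
  ultimately have "E * S < 0" by linarith
  with \<open>0 < S\<close> have "E < 0" by (simp add: mult_less_0_iff)
  then show ?thesis unfolding E_def by simp
qed

lemma mult_divide_pos_less_square:
  fixes \<rho> N D :: real
  assumes "0 < \<rho>" "0 < N" "N < \<rho> * D"
  shows "0 < \<rho> * N / D \<and> \<rho> * N / D < \<rho>\<^sup>2"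
proof -
  have "0 < \<rho> * D" using assms by linarith
  then have "0 < D" using assms(1) by (simp add: zero_less_mult_iff)
  have "\<rho> * N < \<rho>\<^sup>2 * D"
    using mult_strict_left_mono[OF assms(3,1)] by (simp add: power2_eq_square mult.assoc)
  with \<open>0 < D\<close> assms(1,2) show ?thesis by (simp add: pos_divide_less_eq)
qed

theorem lemma3p3:
  fixes m L \<kappa> \<delta> \<alpha> \<alpha>\<^sub>m \<rho> \<gamma> :: real
  assumes "0 < m" and "m < L"
    and "\<kappa> = L / m"
    and "0 < \<delta>" and "\<delta> < 1"
    and "\<alpha>\<^sub>m = (1 / (1 - \<delta>)) * (2 / (L + m) - \<delta> / m)"
    and "max \<alpha>\<^sub>m 0 < \<alpha>"
    and "\<alpha> \<le> 2 / ((1 + \<delta>) * L + (1 - \<delta>) * m)"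
    and "\<rho> = 1 - \<alpha> * m * (1 - \<delta>)"
    and "\<gamma> = \<rho> * (\<kappa> - 1 + (\<kappa> + 1) * (\<delta> - \<rho>)) / ((\<kappa> - (1 - \<delta>)) * \<delta>)"
  shows "0 < \<gamma> \<and> \<gamma> < \<rho>\<^sup>2"
proof -
  have "0 < L" and "1 \<le> \<kappa>" using assms(1-3) by simp_all
  have upper: "(1 - \<rho>) * ((1 + \<delta>) * \<kappa> + (1 - \<delta>)) \<le> 2 * (1 - \<delta>)"
    using upper_step_bound_rescaled[OF assms(1) \<open>0 < L\<close> assms(4,5,8)]
    unfolding assms(3,9)[symmetric] .
  have lower: "(1 / (1 - \<delta>)) * (2 / (L + m) - \<delta> / m) < \<alpha>" using assms(6,7) by simp
  have "0 < \<rho>"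
    using rate_pos_of_upper_step_bound[OF \<open>1 \<le> \<kappa>\<close> assms(4) upper] .
  moreover have "0 < \<kappa> - 1 + (\<kappa> + 1) * (\<delta> - \<rho>)"
    using numerator_pos_of_lower_step_bound[OF assms(1) \<open>0 < L\<close> assms(5) lower]
    unfolding assms(3,9)[symmetric] .
  moreover have "\<kappa> - 1 + (\<kappa> + 1) * (\<delta> - \<rho>) < \<rho> * ((\<kappa> - (1 - \<delta>)) * \<delta>)"
    using numerator_less_of_upper_step_bound[OF \<open>1 \<le> \<kappa>\<close> assms(4) upper] .
  ultimately show ?thesis
    unfolding assms(10) by (rule mult_divide_pos_less_square)
qed

end
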